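(* Let $x>1$ be an irrational real number and let $(x_n)_{n\geq1}$ be any sequence of rational numbers with $x_n\geq1$ and $x_n\to x$. Write the Taylor expansion at $q=0$ of the $q$-deformed rational $[x_n]_q$ as $[x_n]_q=\sum_{k\geq0}\varkappa_{n,k}q^k$. Then for every fixed $k\geq0$ the sequence $(\varkappa_{n,k})_{n\geq1}$ is eventually constant. Its eventual value $\varkappa_k=\lim_{n\to\infty}\varkappa_{n,k}$ is an integer, and the sequence $(\varkappa_k)_{k\geq0}$ does not depend on the choice of the sequence $(x_n)$ converging to $x$.
   Context: For an integer $a\geq1$ put $[a]_q=1+q+\cdots+q^{a-1}$ and $[a]_{q^{-1}}=1+q^{-1}+\cdots+q^{-(a-1)}$. Every rational number $r/s>1$ has a unique expansion as a regular continued fraction of even length, $$r/s=[a_1,\ldots,a_{2m}]=a_1+\cfrac{1}{a_2+\cfrac{1}{\ddots+\cfrac{1}{a_{2m}}}},$$ with all $a_i\in\mathbb{Z}_{\geq1}$. Its $q$-deformation is the rational function $$\left[\tfrac{r}{s}\right]_q=[a_1]_q+\cfrac{q^{a_1}}{[a_2]_{q^{-1}}+\cfrac{q^{-a_2}}{[a_3]_q+\cfrac{q^{a_3}}{[a_4]_{q^{-1}}+\cfrac{q^{-a_4}}{\ddots+\cfrac{q^{a_{2m-1}}}{[a_{2m}]_{q^{-1}}}}}}}.$$ One also sets $[1]_q=1$; for integers $n\geq2$ this gives $[n]_q=1+q+\cdots+q^{n-1}$. Each $[r/s]_q$ is a quotient $\mathcal{R}(q)/\mathcal{S}(q)$ of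 polynomials with nonnegative integer coefficients, each having constant term $1$. It is identified with its Taylor expansion at $q=0$, which is an element of $\mathbb{Z}[[q]]$. *)

theory Defs
  imports "HOL-Analysis.Analysis" "HOL-Computational_Algebra.Formal_Laurent_Series"
begin

fun cf_val :: "nat list \<Rightarrow> rat" where
  "cf_val [] = 0"
| "cf_val [a] = of_nat a"
| "cf_val (a # as) = of_nat a + 1 / cf_val as"

definition even_cf :: "rat \<Rightarrow> nat list" where
  "even_cf r = (THE as. as \<noteq> [] \<and> even (length as) \<and> (\<forall>a\<in>set as. a \<ge> 1) \<and> cf_val as = r)"

definition qint :: "nat \<Rightarrow> rat fls" where
  "qint a = (\<Sum>i<a. fls_X ^ i)"

definition qint_inv :: "nat \<Rightarrow> rat fls" where
  "qint_inv a = (\<Sum>i<a. fls_X_inv ^ i)"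

text \<open>The q-deformed continued fraction; the flag says whether the current level
  uses q (True) or q^{-1} (False).\<close>
fun qcf :: "bool \<Rightarrow> nat list \<Rightarrow> rat fls" where
  "qcf b [] = 0"
| "qcf b [a] = (if b then qint a else qint_inv a)"
| "qcf b (a # as) =
     (if b then qint a + fls_X ^ a / qcf False as
           else qint_inv a + fls_X_inv ^ a / qcf True as)"

text \<open>The q-deformed rational [r]_q for rational r \<ge> 1 (with [1]_q = 1), as an element
  of the field of formal Laurent series (i.e. its expansion at q = 0).\<close>
definition qrat :: "rat \<Rightarrow> rat fls" where
  "qrat r = (if r = 1 then 1 else qcf True (even_cf r))"

end

theory Submission
  imports Defs
begin

text \<open>
  Since [b]_{q^{-1}} = q^{1-b} [b]_q, the q-deformed continued fraction of an even-length
  expansion [a_1, ..., a_{2m}] is a power series with constant term 1 and integer coefficients,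
  and every pair of levels contributes a factor q^{a_{2i-1} + a_{2i}} of positive degree. So its
  coefficients up to q^k depend only on the first 2k + 2 partial quotients. The continued
  fraction digits are locally constant near an irrational x: every rational close enough to x
  has an even expansion beginning with the first 2k + 2 digits of x, and the k-th coefficient
  of its q-deformation is that of this common prefix.
\<close>

section \<open>Formal power series\<close>

lemma fls_X_inv_times_X: "fls_X_inv * fls_X = (1 :: 'a::field fls)"
  by (metis fls_inverse_X fls_X_nonzero left_inverse)

lemma fls_X_power_divide_X_inv_power:
  "fls_X ^ a / (fls_X_inv ^ b * f) = fls_X ^ (a + b) / (f :: 'a::field fls)"
  by (simp add: divide_inverse fls_inverse_X_inv_power power_add mult_ac)

lemma fps_to_fls_inverse:
  "f $ 0 \<noteq> 0 \<Longrightarrow> fps_to_fls (inverse f) = inverse (fps_to_fls (f :: 'a::field fps))"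
  by (simp add: fls_inverse_fps_to_fls)

lemma fps_X_dvd_if_nth_0: "f $ 0 = 0 \<Longrightarrow> fps_X dvd (f :: 'a::comm_ring_1 fps)"
  by (rule dvdI[of _ _ "fps_shift 1 f"]) (simp add: fps_eq_iff fps_X_mult_nth)

lemma fps_nth_eq_if_X_power_dvd_diff:
  assumes "fps_X ^ j dvd (f - g)" "k < j"
  shows "f $ k = (g :: 'a::comm_ring_1 fps) $ k"
proof -
  obtain h where "f - g = fps_X ^ j * h"
    using assms(1) by blast
  then have "(f - g) $ k = 0"
    using assms(2) by (simp add: fps_X_power_mult_nth)
  then show ?thesis by simp
qed

lemma fps_inverse_diff:
  fixes f g :: "'a::field fps"
  assumes "f $ 0 \<noteq> 0" "g $ 0 \<noteq> 0"
  shows "inverse f - inverse g = (g - f) * inverse f * inverse g"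
proof -
  have "(g - f) * inverse f * inverse g = (g * inverse g) * inverse f - (f * inverse f) * inverse g"
    by (simp add: algebra_simps)
  also have "\<dots> = inverse f - inverse g"
    using assms by (simp add: inverse_mult_eq_1')
  finally show ?thesis by simp
qed

lemma fps_inverse_diff_dvd:
  fixes f g :: "'a::field fps"
  assumes "f $ 0 \<noteq> 0" "g $ 0 \<noteq> 0" "d dvd (f - g)"
  shows "d dvd (inverse f - inverse g)"
proof -
  have "d dvd (g - f)"
    using assms(3) by (metis dvd_minus_iff minus_diff_eq)
  then show ?thesis
    using assms(1,2) by (simp add: fps_inverse_diff)
qed

definition int_coeffs :: "'a::ring_1 fps \<Rightarrow> bool" where
  "int_coeffs f \<longleftrightarrow> (\<forall>n. f $ n \<in> \<int>)"

lemma int_coeffs_add: "int_coeffs f \<Longrightarrow> int_coeffs g \<Longrightarrow> int_coeffs (f + g)"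
  by (simp add: int_coeffs_def)

lemma int_coeffs_mult: "int_coeffs f \<Longrightarrow> int_coeffs g \<Longrightarrow> int_coeffs (f * g)"
  by (simp add: int_coeffs_def fps_mult_nth Ints_sum Ints_mult)

lemma int_coeffs_power: "int_coeffs f \<Longrightarrow> int_coeffs (f ^ n)"
  by (induction n) (simp_all add: int_coeffs_mult, simp add: int_coeffs_def)

lemma int_coeffs_fps_X: "int_coeffs fps_X"
  by (simp add: int_coeffs_def fps_X_def)

lemma int_coeffs_inverse:
  fixes f :: "'a::field fps"
  assumes "int_coeffs f" "f $ 0 = 1"
  shows "int_coeffs (inverse f)"
proof -
  have "inverse f $ n \<in> \<int>" for n
  proof (induction n rule: less_induct)
    case (less n)
    show ?case
    proof (cases n)
      case 0
      then show ?thesis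
        using assms(2) by simp
    next
      case (Suc m)
      have "0 = (f * inverse f) $ n"
        using assms(2) Suc by (simp add: inverse_mult_eq_1')
      also have "\<dots> = inverse f $ n + (\<Sum>i=1..n. f $ i * inverse f $ (n - i))"
        using assms(2) by (simp add: fps_mult_nth sum.atLeast_Suc_atMost)
      finally have "inverse f $ n = - (\<Sum>i=1..n. f $ i * inverse f $ (n - i))"
        by (simp add: eq_neg_iff_add_eq_0)
      moreover have "(\<Sum>i=1..n. f $ i * inverse f $ (n - i)) \<in> \<int>"
        using assms(1) less Suc by (intro Ints_sum Ints_mult) (auto simp: int_coeffs_def)
      ultimately show ?thesis
        by simp
    qed
  qed
  then show ?thesis
    by (simp add: int_coeffs_def)
qed

section \<open>Even q-continued fractions as power series\<close>

definition qint_fps :: "nat \<Rightarrow> 'a::comm_ring_1 fps" where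
  "qint_fps a = (\<Sum>i<a. fps_X ^ i)"

lemma qint_fps_nth: "qint_fps a $ n = (if n < a then 1 else 0)"
  by (simp add: qint_fps_def fps_sum_nth)

lemma fps_to_fls_qint_fps: "fps_to_fls (qint_fps a) = qint a"
  by (induction a) (simp_all add: qint_fps_def qint_def fps_to_fls_power)

lemma int_coeffs_qint_fps: "int_coeffs (qint_fps a)"
  by (simp add: int_coeffs_def qint_fps_nth)

lemma qint_inv_conv_qint: "qint_inv b = fls_X_inv ^ b * (fls_X * qint b)"
proof -
  have X_power_qint_inv: "fls_X ^ b * qint_inv b = fls_X * qint b"
  proof (induction b)
    case (Suc b)
    have "qint_inv (Suc b) = 1 + fls_X_inv * qint_inv b"
      unfolding qint_inv_def by (subst sum.lessThan_Suc_shift) (simp add: sum_distrib_left)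
    then have "fls_X ^ Suc b * qint_inv (Suc b)
        = fls_X ^ Suc b + (fls_X_inv * fls_X) * (fls_X ^ b * qint_inv b)"
      by (simp add: algebra_simps)
    also have "\<dots> = fls_X * qint (Suc b)"
      by (simp only: fls_X_inv_times_X mult_1 Suc) (simp add: qint_def algebra_simps)
    finally show ?case .
  qed (simp add: qint_def qint_inv_def)
  have "qint_inv b = (fls_X_inv * fls_X) ^ b * qint_inv b"
    by (simp add: fls_X_inv_times_X)
  also have "\<dots> = fls_X_inv ^ b * (fls_X * qint b)"
    by (simp only: power_mult_distrib mult.assoc X_power_qint_inv)
  finally show ?thesis .
qed

definition valid_cf :: "nat list \<Rightarrow> bool" where
  "valid_cf l \<longleftrightarrow> l \<noteq> [] \<and> (\<forall>a\<in>set l. 1 \<le> a)"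

lemma valid_cf_Cons: "valid_cf (a # l) \<longleftrightarrow> 1 \<le> a \<and> (l = [] \<or> valid_cf l)"
  by (auto simp: valid_cf_def)

fun qcf_fps :: "nat list \<Rightarrow> 'a::field fps" where
  "qcf_fps [a, b] = qint_fps a + fps_X ^ (a + b - 1) * inverse (qint_fps b)"
| "qcf_fps (a # b # c # l) =
     qint_fps a + fps_X ^ (a + b) * inverse (fps_X * qint_fps b + inverse (qcf_fps (c # l)))"
| "qcf_fps _ = 0"

lemma qcf_fps_nth_0: "valid_cf l \<Longrightarrow> even (length l) \<Longrightarrow> qcf_fps l $ 0 = 1"
  by (induction l rule: qcf_fps.induct) (auto simp: qint_fps_nth fps_X_power_mult_nth valid_cf_def)

lemma fps_to_fls_qcf_fps:
  "valid_cf l \<Longrightarrow> even (length l) \<Longrightarrow> fps_to_fls (qcf_fps l) = qcf True l"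
proof (induction l rule: qcf_fps.induct)
  case (1 a b)
  then obtain k where k: "a + b = Suc k" and "qint_fps b $ 0 \<noteq> (0 :: rat)"
    by (auto simp: valid_cf_def qint_fps_nth) (metis Suc_le_D add_Suc)
  then have "qcf True [a, b] = qint a + fls_X ^ (a + b - 1) / qint b"
    by (simp add: qint_inv_conv_qint fls_X_power_divide_X_inv_power k)
  also have "\<dots> = fps_to_fls (qcf_fps [a, b])"
    using \<open>qint_fps b $ 0 \<noteq> 0\<close>
    by (simp add: fps_to_fls_inverse fls_times_fps_to_fls fps_to_fls_power fps_to_fls_qint_fps
        divide_inverse)
  finally show ?case ..
next
  case (2 a b c l)
  then have "valid_cf (c # l)" "even (length (c # l))"
    by (auto simp: valid_cf_Cons)
  then have IH: "fps_to_fls (qcf_fps (c # l)) = qcf True (c # l)"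
    and "qcf_fps (c # l) $ 0 = (1 :: rat)"
    using 2(1) qcf_fps_nth_0 by blast+
  have "qint_inv b + fls_X_inv ^ b / qcf True (c # l)
      = fls_X_inv ^ b * (fls_X * qint b + inverse (qcf True (c # l)))"
    by (simp add: qint_inv_conv_qint divide_inverse distrib_left)
  then have "qcf True (a # b # c # l)
      = qint a + fls_X ^ (a + b) / (fls_X * qint b + inverse (qcf True (c # l)))"
    by (simp add: fls_X_power_divide_X_inv_power)
  also have "\<dots> = fps_to_fls (qcf_fps (a # b # c # l))"
    using \<open>qcf_fps (c # l) $ 0 = 1\<close>
    by (simp add: IH[symmetric] fps_to_fls_inverse fls_times_fps_to_fls fps_to_fls_power
        fps_to_fls_qint_fps divide_inverse)
  finally show ?case ..
qed (auto simp: valid_cf_def)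

lemma qcf_fps_Cons_Cons:
  "l \<noteq> [] \<Longrightarrow> qcf_fps (a # b # l) =
     qint_fps a + fps_X ^ (a + b) * inverse (fps_X * qint_fps b + inverse (qcf_fps l))"
  by (cases l) simp_all

lemma qcf_fps_Cons_Cons_congruent:
  fixes r r' :: "nat list"
  assumes "1 \<le> a" "valid_cf r" "valid_cf r'" "even (length r)" "even (length r')"
    and "fps_X ^ j dvd (qcf_fps r - qcf_fps r' :: 'a::field fps)"
  shows "fps_X ^ Suc j dvd (qcf_fps (a # b # r) - qcf_fps (a # b # r') :: 'a fps)"
proof -
  define A where "A r = fps_X * qint_fps b + inverse (qcf_fps r :: 'a fps)" for r
  have "fps_X ^ j dvd (inverse (qcf_fps r) - inverse (qcf_fps r') :: 'a fps)"
    using assms by (intro fps_inverse_diff_dvd) (simp_all add: qcf_fps_nth_0)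
  then have "fps_X ^ j dvd (inverse (A r) - inverse (A r'))"
    using assms by (intro fps_inverse_diff_dvd) (simp_all add: A_def qcf_fps_nth_0)
  moreover have "fps_X dvd (fps_X ^ (a + b) :: 'a fps)"
    using assms(1) by (simp add: dvd_power)
  ultimately have "fps_X * fps_X ^ j dvd fps_X ^ (a + b) * (inverse (A r) - inverse (A r'))"
    by (rule mult_dvd_mono[rotated])
  then show ?thesis
    using assms(2,3) by (simp add: A_def qcf_fps_Cons_Cons right_diff_distrib valid_cf_def)
qed

lemma qcf_fps_congruent:
  assumes "valid_cf l" "valid_cf l'" "even (length l)" "even (length l')"
    and "take (2 * j) l = take (2 * j) l'"
  shows "fps_X ^ j dvd (qcf_fps l - qcf_fps l' :: 'a::field fps)"
  using assms
proof (induction j arbitrary: l l')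
  case (Suc j)
  obtain a b r where l: "l = a # b # r"
    using Suc.prems(1,3) by (cases l rule: qcf_fps.cases) (auto simp: valid_cf_def)
  obtain r' where l': "l' = a # b # r'" and r: "take (2 * j) r = take (2 * j) r'"
    using Suc.prems(2,4,5) l by (cases l' rule: qcf_fps.cases) (auto simp: valid_cf_def)
  consider "j = 0" | "r = []" "r' = []" | "j > 0" "r \<noteq> []" "r' \<noteq> []"
    using r by fastforce
  then show ?case
  proof cases
    case 1
    have "qcf_fps l $ 0 = (1 :: 'a)" "qcf_fps l' $ 0 = (1 :: 'a)"
      using Suc.prems(1-4) qcf_fps_nth_0 by blast+
    then show ?thesis
      using 1 by (simp add: fps_X_dvd_if_nth_0)
  next
    case 2
    then show ?thesis
      by (simp add: l l')
  next
    case 3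
    then show ?thesis
      using Suc r unfolding l l' by (intro qcf_fps_Cons_Cons_congruent) (auto simp: valid_cf_def)
  qed
qed simp

lemma int_coeffs_qcf_fps: "valid_cf l \<Longrightarrow> even (length l) \<Longrightarrow> int_coeffs (qcf_fps l)"
proof (induction l rule: qcf_fps.induct)
  case (1 a b)
  then have "qint_fps b $ 0 = (1 :: 'a)"
    by (simp add: valid_cf_def qint_fps_nth)
  then show ?case
    by (simp add: int_coeffs_add int_coeffs_mult int_coeffs_power int_coeffs_inverse
        int_coeffs_qint_fps int_coeffs_fps_X)
next
  case (2 a b c l)
  then have "valid_cf (c # l)" "even (length (c # l))"
    by (auto simp: valid_cf_Cons)
  then have "int_coeffs (qcf_fps (c # l) :: 'a fps)" "qcf_fps (c # l) $ 0 = (1 :: 'a)"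
    using 2(1) qcf_fps_nth_0 by blast+
  then show ?case
    by (simp add: int_coeffs_add int_coeffs_mult int_coeffs_power int_coeffs_inverse
        int_coeffs_qint_fps int_coeffs_fps_X)
qed (auto simp: valid_cf_def)

section \<open>Regular continued fraction expansions of rationals\<close>

lemma cf_val_Cons: "l \<noteq> [] \<Longrightarrow> cf_val (a # l) = of_nat a + 1 / cf_val l"
  by (cases l) auto

lemma cf_val_ge_1: "valid_cf l \<Longrightarrow> 1 \<le> cf_val l"
proof (induction l rule: cf_val.induct)
  case (3 a b l)
  then have "1 \<le> a" "1 \<le> cf_val (b # l)"
    by (auto simp: valid_cf_Cons)
  then show ?case
    by (simp add: add_increasing2)
qed (auto simp: valid_cf_def)

lemma cf_val_Cons_bounds:
  assumes "valid_cf (a # l)" "l \<noteq> []"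
  shows "of_nat a < cf_val (a # l)" "cf_val (a # l) \<le> of_nat a + 1"
proof -
  have "1 \<le> cf_val l"
    using assms by (simp add: valid_cf_Cons cf_val_ge_1)
  then show "of_nat a < cf_val (a # l)" "cf_val (a # l) \<le> of_nat a + 1"
    using assms(2) by (simp_all add: cf_val_Cons)
qed

lemma cf_val_eq_1: "valid_cf l \<Longrightarrow> cf_val l = 1 \<Longrightarrow> l = [1]"
proof (cases l rule: cf_val.cases)
  case (3 a b l')
  moreover assume "valid_cf l" "cf_val l = 1"
  ultimately have "of_nat a < (1 :: rat)" "1 \<le> a"
    using cf_val_Cons_bounds(1)[of a "b # l'"] by (auto simp: valid_cf_def)
  then show ?thesis
    by simp
qed (auto simp: valid_cf_def)

lemma cf_val_Cons_eq_of_nat: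
  assumes "valid_cf (m # s)" "s \<noteq> []" "cf_val (m # s) = of_nat n"
  shows "s = [1]"
proof -
  have "of_nat m < (of_nat n :: rat)" "(of_nat n :: rat) \<le> of_nat m + 1"
    using assms cf_val_Cons_bounds[of m s] by simp_all
  then have "n = Suc m"
    by simp
  then have "cf_val s = 1"
    using assms by (simp add: cf_val_Cons)
  then show "s = [1]"
    using assms cf_val_eq_1[of s] by (simp add: valid_cf_Cons)
qed

lemma cf_val_inj:
  assumes "valid_cf l" "valid_cf l'" "cf_val l = cf_val l'"
    and "even (length l) \<longleftrightarrow> even (length l')"
  shows "l = l'"
  using assms
proof (induction l arbitrary: l')
  case (Cons a r)
  obtain c r' where l': "l' = c # r'"
    using Cons.prems(2) by (cases l') (auto simp: valid_cf_def)
  consider "r = []" "r' = []" | "r = []" "r' \<noteq> []" | "r \<noteq> []" "r' = []"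
    | "r \<noteq> []" "r' \<noteq> []"
    by blast
  then show ?case
  proof cases
    case 1
    then show ?thesis
      using Cons.prems(3) l' by simp
  next
    case 2
    then show ?thesis
      using cf_val_Cons_eq_of_nat[of c r' a] Cons.prems l' by auto
  next
    case 3
    then show ?thesis
      using cf_val_Cons_eq_of_nat[of a r c] Cons.prems l' by auto
  next
    case 4
    have "of_nat a < cf_val l'" "cf_val l' \<le> of_nat a + 1"
      "of_nat c < cf_val l'" "cf_val l' \<le> of_nat c + 1"
      using 4 Cons.prems cf_val_Cons_bounds[of a r] cf_val_Cons_bounds[of c r']
      by (simp_all add: l')
    then have "a = c"
      by linarith
    then have "cf_val r = cf_val r'"
      using 4 Cons.prems(3) by (simp add: l' cf_val_Cons)
    moreover have "valid_cf r" "valid_cf r'"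
      using 4 Cons.prems(1,2) by (simp_all add: l' valid_cf_Cons)
    ultimately have "r = r'"
      using Cons.IH[of r'] Cons.prems(4) l' by simp
    then show ?thesis
      using \<open>a = c\<close> l' by simp
  qed
qed (simp add: valid_cf_def)

lemma cf_expansions_exist:
  assumes "0 < q" "of_nat q * r \<in> \<int>" "1 \<le> r"
  shows "(\<exists>l. valid_cf l \<and> odd (length l) \<and> cf_val l = r) \<and>
    (1 < r \<longrightarrow> (\<exists>l. valid_cf l \<and> even (length l) \<and> cf_val l = r))"
  using assms
proof (induction q arbitrary: r rule: less_induct)
  \<comment> \<open>If \<open>q\<close> is a denominator of \<open>r\<close>, then \<open>q * frac r < q\<close> is one of \<open>1 / frac r\<close>.\<close>
  case (less q)
  show ?case
  proof (cases "r \<in> \<int>")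
    case True
    then obtain n where n: "r = of_int n"
      by (elim Ints_cases)
    then have "1 \<le> n"
      using less.prems by simp
    then have "valid_cf [nat n]" "cf_val [nat n] = r"
      and "1 < r \<Longrightarrow> valid_cf [nat n - 1, 1] \<and> cf_val [nat n - 1, 1] = r"
      using n by (auto simp: valid_cf_def of_nat_diff)
    then show ?thesis
      by fastforce
  next
    case False
    define a where "a = nat \<lfloor>r\<rfloor>"
    define r' where "r' = 1 / frac r"
    have frac: "0 < frac r" "frac r < 1"
      using False by (simp_all add: frac_lt_1)
    have a: "1 \<le> a" "r = of_nat a + 1 / r'"
      using less.prems(3) by (simp_all add: a_def r'_def frac_def le_nat_iff le_floor_iff)
    have "1 < r'"
      using frac by (simp add: r'_def)
    have "of_nat q * frac r \<in> \<int>"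
      using less.prems(2) by (simp add: frac_def right_diff_distrib)
    then obtain m where m: "of_nat q * frac r = of_int m"
      by (elim Ints_cases)
    have "(0 :: rat) < of_int m" "(of_int m :: rat) < of_int (int q)"
      using m frac less.prems(1) by (simp_all flip: m)
    then have "0 < nat m" "nat m < q"
      by simp_all
    moreover have "of_nat (nat m) * r' = of_nat q"
      using m \<open>0 < nat m\<close> frac by (simp add: r'_def field_simps)
    ultimately obtain l1 l2 where
      l1: "valid_cf l1" "odd (length l1)" "cf_val l1 = r'" and
      l2: "valid_cf l2" "even (length l2)" "cf_val l2 = r'"
      using less.IH[of "nat m" r'] \<open>1 < r'\<close> by (metis Ints_of_nat less_imp_le)
    then have "l1 \<noteq> []" "l2 \<noteq> []"
      by (auto simp: valid_cf_def)
    then have "valid_cf (a # l2) \<and> odd (length (a # l2)) \<and> cf_val (a # l2) = r"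
      and "valid_cf (a # l1) \<and> even (length (a # l1)) \<and> cf_val (a # l1) = r"
      using l1 l2 a by (simp_all add: valid_cf_Cons cf_val_Cons)
    then show ?thesis
      by blast
  qed
qed

lemma even_cf:
  assumes "1 < r"
  shows "valid_cf (even_cf r)" "even (length (even_cf r))" "cf_val (even_cf r) = r"
proof -
  obtain p q where "quotient_of r = (p, q)"
    by fastforce
  then have "0 < q" "r = of_int p / of_int q"
    by (simp_all add: quotient_of_denom_pos quotient_of_div)
  then have "of_nat (nat q) * r \<in> \<int>"
    by simp
  then obtain l where l: "valid_cf l" "even (length l)" "cf_val l = r"
    using cf_expansions_exist[of "nat q" r] assms \<open>0 < q\<close> by auto
  have "even_cf r = l"
    unfolding even_cf_def
  proof (rule the_equality)
    show "l \<noteq> [] \<and> even (length l) \<and> (\<forall>a\<in>set l. 1 \<le> a) \<and> cf_val l = r"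
      using l by (simp add: valid_cf_def)
  next
    fix l' assume "l' \<noteq> [] \<and> even (length l') \<and> (\<forall>a\<in>set l'. 1 \<le> a) \<and> cf_val l' = r"
    then show "l' = l"
      using l cf_val_inj[of l' l] by (simp add: valid_cf_def)
  qed
  with l show "valid_cf (even_cf r)" "even (length (even_cf r))" "cf_val (even_cf r) = r"
    by simp_all
qed

lemma qrat_conv_qcf_fps: "1 < r \<Longrightarrow> qrat r = fps_to_fls (qcf_fps (even_cf r))"
  by (simp add: qrat_def fps_to_fls_qcf_fps even_cf)

lemma qrat_nth_Ints: "1 \<le> r \<Longrightarrow> fls_nth (qrat r) (int k) \<in> \<int>"
proof (cases "r = 1")
  case False
  moreover assume "1 \<le> r"
  ultimately have "1 < r"
    by simp
  moreover have "int_coeffs (qcf_fps (even_cf r) :: rat fps)"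
    using \<open>1 < r\<close> by (simp add: int_coeffs_qcf_fps even_cf)
  ultimately show ?thesis
    by (simp add: qrat_conv_qcf_fps int_coeffs_def)
qed (simp add: qrat_def)

lemma qrat_nth_eq_qcf_fps_prefix:
  assumes "1 < r" "take (2 * Suc k) (even_cf r) = P" "length P = 2 * Suc k"
  shows "fls_nth (qrat r) (int k) = qcf_fps P $ k"
proof -
  have "valid_cf P"
    using even_cf(1)[OF assms(1)] assms(2,3) set_take_subset[of "2 * Suc k" "even_cf r"]
    by (auto simp: valid_cf_def)
  moreover have "take (2 * Suc k) (even_cf r) = take (2 * Suc k) P"
    using assms(2,3) by simp
  ultimately have "fps_X ^ Suc k dvd (qcf_fps (even_cf r) - qcf_fps P :: rat fps)"
    using assms(1,3) by (intro qcf_fps_congruent) (simp_all add: even_cf)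
  then have "qcf_fps (even_cf r) $ k = (qcf_fps P $ k :: rat)"
    by (rule fps_nth_eq_if_X_power_dvd_diff) simp
  then show ?thesis
    using assms(1) by (simp add: qrat_conv_qcf_fps)
qed

section \<open>Stability of the digits near an irrational\<close>

text \<open>At integers \<open>frac y = 0\<close> and \<open>cf_step\<close> takes the junk value 0; it is only iterated
  along non-integral points.\<close>

definition cf_step :: "'a::floor_ceiling \<Rightarrow> 'a" where
  "cf_step y = 1 / frac y"

definition cf_prefix :: "'a::floor_ceiling \<Rightarrow> nat \<Rightarrow> nat list" where
  "cf_prefix y m = map (\<lambda>i. nat \<lfloor>(cf_step ^^ i) y\<rfloor>) [0..<m]"

lemma cf_prefix_Suc: "cf_prefix y (Suc m) = nat \<lfloor>y\<rfloor> # cf_prefix (cf_step y) m"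
  by (simp add: cf_prefix_def map_upt_Suc funpow_swap1 del: upt_Suc)

lemma cf_val_not_IntsE:
  fixes y :: "'a::floor_ceiling"
  assumes "valid_cf l" "of_rat (cf_val l) = y" "y \<notin> \<int>"
  obtains r where "l = nat \<lfloor>y\<rfloor> # r" "valid_cf r" "of_rat (cf_val r) = cf_step y"
proof -
  obtain a r where l: "l = a # r"
    using assms(1) by (cases l) (auto simp: valid_cf_def)
  have "r \<noteq> []"
    using assms l by auto
  then have r: "valid_cf r"
    using assms(1) l by (simp add: valid_cf_Cons)
  define w where "w = (of_rat (cf_val r) :: 'a)"
  have "1 \<le> w"
    using cf_val_ge_1[OF r] unfolding w_def by (metis of_rat_1 of_rat_less_eq)
  have y: "y = of_nat a + 1 / w"
    using assms(2) l \<open>r \<noteq> []\<close> by (simp add: cf_val_Cons w_def of_rat_add of_rat_divide)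
  have "w \<noteq> 1"
  proof
    assume "w = 1"
    then have "y = of_nat (Suc a)"
      using y by simp
    then show False
      using assms(3) by (metis Ints_of_nat)
  qed
  with \<open>1 \<le> w\<close> have "0 < 1 / w" "1 / w < 1"
    by simp_all
  then have "\<lfloor>y\<rfloor> = int a" "frac y = 1 / w"
    using y by (simp_all add: floor_eq_iff frac_def)
  then show ?thesis
    using that l r by (simp add: cf_step_def w_def)
qed

lemma take_eq_cf_prefix:
  fixes y :: "'a::floor_ceiling"
  assumes "valid_cf l" "of_rat (cf_val l) = y" "\<forall>i<m. (cf_step ^^ i) y \<notin> \<int>"
  shows "take m l = cf_prefix y m"
  using assms
proof (induction m arbitrary: l y)
  case 0
  then show ?case
    by (simp add: cf_prefix_def)
next
  case (Suc m)
  obtain r where "l = nat \<lfloor>y\<rfloor> # r" "valid_cf r" "of_rat (cf_val r) = cf_step y"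
    using cf_val_not_IntsE Suc.prems by (metis funpow_0 zero_less_Suc)
  moreover have "(cf_step ^^ i) (cf_step y) \<notin> \<int>" if "i < m" for i
    using Suc.prems(3)[rule_format, of "Suc i"] that by (simp add: funpow_swap1)
  ultimately show ?case
    using Suc.IH by (simp add: cf_prefix_Suc)
qed

lemma cf_step_not_Rats: "y \<notin> \<rat> \<Longrightarrow> cf_step y \<notin> \<rat>"
proof
  assume "y \<notin> \<rat>" "cf_step y \<in> \<rat>"
  then have "frac y + of_int \<lfloor>y\<rfloor> \<in> \<rat>"
    by (metis Rats_add Rats_inverse Rats_of_int cf_step_def inverse_eq_divide inverse_inverse_eq)
  then show False
    using \<open>y \<notin> \<rat>\<close> by (simp add: frac_def)
qed

lemma funpow_cf_step_not_Rats: "y \<notin> \<rat> \<Longrightarrow> (cf_step ^^ i) y \<notin> \<rat>"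
  by (induction i) (simp_all add: cf_step_not_Rats)

lemma tendsto_cf_step:
  fixes y :: real
  assumes "(f \<longlongrightarrow> y) F" "y \<notin> \<int>"
  shows "((\<lambda>n. cf_step (f n)) \<longlongrightarrow> cf_step y) F"
proof -
  have "isCont cf_step y"
    unfolding cf_step_def[abs_def] using assms(2) continuous_frac by (intro continuous_intros) auto
  then show ?thesis
    using assms(1) by (rule isCont_tendsto_compose)
qed

lemma tendsto_funpow_cf_step:
  fixes y :: real
  assumes "(f \<longlongrightarrow> y) F" "y \<notin> \<rat>"
  shows "((\<lambda>n. (cf_step ^^ i) (f n)) \<longlongrightarrow> (cf_step ^^ i) y) F"
proof (induction i)
  case (Suc i)
  have "(cf_step ^^ i) y \<notin> \<int>"
    using funpow_cf_step_not_Rats[OF assms(2)] Ints_subset_Rats by blast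
  with Suc show ?case
    by (simp add: tendsto_cf_step)
qed (simp add: assms(1))

lemma eventually_not_Ints:
  fixes y :: real
  assumes "(f \<longlongrightarrow> y) F" "y \<notin> \<int>"
  shows "eventually (\<lambda>n. f n \<notin> \<int>) F"
proof -
  have "((\<lambda>n. frac (f n)) \<longlongrightarrow> frac y) F"
    using continuous_frac[OF assms(2)] assms(1) by (rule isCont_tendsto_compose)
  moreover have "0 < frac y"
    using assms(2) by simp
  ultimately show ?thesis
    by (rule order_tendstoD(1)[THEN eventually_mono]) simp
qed

lemma eventually_take_even_cf_eq_cf_prefix:
  fixes xs :: "nat \<Rightarrow> rat" and x :: real
  assumes "(\<lambda>n. of_rat (xs n)) \<longlonglongrightarrow> x" "1 < x" "x \<notin> \<rat>"
  shows "eventually (\<lambda>n. 1 < xs n \<and> take m (even_cf (xs n)) = cf_prefix x m) sequentially"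
proof -
  have conv: "(\<lambda>n. (cf_step ^^ i) (of_rat (xs n) :: real)) \<longlonglongrightarrow> (cf_step ^^ i) x" for i
    using assms(1,3) by (rule tendsto_funpow_cf_step)
  have not_Ints: "(cf_step ^^ i) x \<notin> \<int>" for i
    using funpow_cf_step_not_Rats[OF assms(3)] Ints_subset_Rats by blast
  have "eventually (\<lambda>n. 1 < xs n) sequentially"
    using order_tendstoD(1)[OF assms(1,2)] by (rule eventually_mono) (metis of_rat_1 of_rat_less)
  moreover have "eventually (\<lambda>n. \<forall>i\<in>{..<m}.
      \<lfloor>(cf_step ^^ i) (of_rat (xs n) :: real)\<rfloor> = \<lfloor>(cf_step ^^ i) x\<rfloor> \<and>
      (cf_step ^^ i) (of_rat (xs n) :: real) \<notin> \<int>) sequentially"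
    using conv not_Ints
    by (intro eventually_ball_finite ballI eventually_conj eventually_floor_eq eventually_not_Ints) auto
  ultimately show ?thesis
  proof eventually_elim
    case (elim n)
    then have "take m (even_cf (xs n)) = cf_prefix (of_rat (xs n) :: real) m"
      by (intro take_eq_cf_prefix) (simp_all add: even_cf)
    also have "\<dots> = cf_prefix x m"
      using elim by (simp add: cf_prefix_def)
    finally show ?case
      using elim by simp
  qed
qed

lemma eventually_qrat_nth_eq:
  fixes xs :: "nat \<Rightarrow> rat" and x :: real
  assumes "(\<lambda>n. of_rat (xs n)) \<longlonglongrightarrow> x" "1 < x" "x \<notin> \<rat>"
  shows "eventually (\<lambda>n. 1 < xs n \<and>
    fls_nth (qrat (xs n)) (int k) = qcf_fps (cf_prefix x (2 * Suc k)) $ k) sequentially"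
  using eventually_take_even_cf_eq_cf_prefix[OF assms, of "2 * Suc k"]
proof (rule eventually_mono)
  fix n
  assume "1 < xs n \<and> take (2 * Suc k) (even_cf (xs n)) = cf_prefix x (2 * Suc k)"
  moreover have "length (cf_prefix x (2 * Suc k)) = 2 * Suc k"
    by (simp add: cf_prefix_def)
  ultimately show "1 < xs n \<and>
      fls_nth (qrat (xs n)) (int k) = qcf_fps (cf_prefix x (2 * Suc k)) $ k"
    by (simp add: qrat_nth_eq_qcf_fps_prefix)
qed

theorem theorem1:
  fixes x :: real
  assumes "x > 1" and "x \<notin> \<rat>"
  shows "\<exists>\<kappa> :: nat \<Rightarrow> int. \<forall>xs :: nat \<Rightarrow> rat.
           (\<forall>n. xs n \<ge> 1) \<and> (\<lambda>n. of_rat (xs n) :: real) \<longlonglongrightarrow> x \<longrightarrow>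
           (\<forall>k. eventually (\<lambda>n. fls_nth (qrat (xs n)) (int k) = of_int (\<kappa> k)) sequentially)"
proof -
  define \<kappa> where "\<kappa> k = \<lfloor>qcf_fps (cf_prefix x (2 * Suc k)) $ k :: rat\<rfloor>" for k
  have "eventually (\<lambda>n. fls_nth (qrat (xs n)) (int k) = of_int (\<kappa> k)) sequentially"
    if "(\<lambda>n. of_rat (xs n) :: real) \<longlonglongrightarrow> x" for xs k
  proof -
    let ?c = "qcf_fps (cf_prefix x (2 * Suc k)) $ k :: rat"
    have ev: "eventually (\<lambda>n. 1 < xs n \<and> fls_nth (qrat (xs n)) (int k) = ?c) sequentially"
      using that assms by (rule eventually_qrat_nth_eq)
    then obtain n where "1 < xs n" "fls_nth (qrat (xs n)) (int k) = ?c"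
      using eventually_happens'[OF sequentially_bot ev] by blast
    then have "?c \<in> \<int>"
      using qrat_nth_Ints[of "xs n" k] by simp
    then have "of_int (\<kappa> k) = ?c"
      by (metis \<kappa>_def Ints_cases floor_of_int)
    with ev show ?thesis
      by (simp add: eventually_mono)
  qed
  then show ?thesis
    by blast
qed

end
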